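(* For $i,j\in I_n$ with $i\ne j$ consider the inequality $$(\ast)_{ij}:\qquad \max\left\{0,\ \frac{a_{ij}}{a_{jj}}\bigl(1-\alpha_jU^{I_n\setminus\{i,j\}}\bigr)\right\}<1-\alpha_iU^{I_n\setminus\{i,j\}}.$$ (i) For any $J\subset I_n$ with $|J|>1$, if condition $(C_i)$ holds for all $i\in J$, then $(\ast)_{ij}$ holds for all $i,j\in J$ with $i\ne j$. (ii) For a fixed $i\in I_n$, if $(\ast)_{ij}$ holds for all $j\in I_n\setminus\{i\}$, then condition $(C_i)$ holds. (iii) Condition $(C_i)$ holds for all $i\in I_n$ if and only if $(\ast)_{ij}$ holds for all $i,j\in I_n$ with $i\ne j$.
   Context: Fix $n\ge 2$ and $I_m=\{1,\dots,m\}$. Consider the Lotka–Volterra system $x_i'=b_ix_i(1-\alpha_ix)$, $i\in I_n$, where $b_i>0$, $\alpha_i=(a_{i1},\dots,a_{in})$ with $a_{ii}>0$ and $a_{ij}\ge 0$, on $\mathbb{R}^n_+$. For $u\le v$ (componentwise), $[u,v]=\{x\in\mathbb{R}^n_+:u\le x\le v\}$. For $J\subset I_n$, $u^J_i=u_i$ for $i\in J$ and $0$ otherwise. $\gamma_i=\{x\in\mathbb{R}^n_+:\alpha_ix=1\}$. Define $U$ componentwise by: $U_i=a_{ii}^{-1}$ if $a_{ii}\le a_{ji}$ or $a_{ij}=0$ for some $j\ne i$; otherwise $U_i=0$ if $a_{ji}<a_{ii}$ and $a_{jk}\le a_{ik}$ for all $j,k\in I_n\setminus\{i\}$; otherwise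 $U_i=\max\{\frac{a_{kj}-a_{ij}}{a_{ii}a_{kj}-a_{ij}a_{ki}}: j,k\in I_n\setminus\{i\},\ a_{kj}>a_{ij}\}$. Condition $(C_k)$: either $\alpha_kU^{I_n\setminus\{k\}}<1$, or every $x\in\gamma_k\cap[0,U^{I_n\setminus\{k\}}]$ satisfies $\alpha_jx>1$ for all $j\in I_n\setminus\{k\}$. *)

theory Defs
  imports "HOL-Analysis.Analysis"
begin

definition LValpha :: "real^'n^'n \<Rightarrow> 'n \<Rightarrow> real^'n \<Rightarrow> real" where
  "LValpha a i x = (\<Sum>j\<in>UNIV. a$i$j * x$j)"

definition restr :: "real^'n \<Rightarrow> 'n set \<Rightarrow> real^'n" where
  "restr u J = (\<chi> i. if i \<in> J then u$i else 0)"

definition Uvec :: "real^'n^'n \<Rightarrow> real^'n" where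
  "Uvec a = (\<chi> i.
     if (\<exists>j. j \<noteq> i \<and> (a$i$i \<le> a$j$i \<or> a$i$j = 0)) then 1 / a$i$i
     else if (\<forall>j k. j \<noteq> i \<longrightarrow> k \<noteq> i \<longrightarrow> a$j$i < a$i$i \<and> a$j$k \<le> a$i$k) then 0
     else Max {(a$k$j - a$i$j) / (a$i$i * a$k$j - a$i$j * a$k$i) | j k.
                 j \<noteq> i \<and> k \<noteq> i \<and> a$k$j > a$i$j})"

definition gamma :: "real^'n^'n \<Rightarrow> 'n \<Rightarrow> (real^'n) set" where
  "gamma a k = {x. (\<forall>i. 0 \<le> x$i) \<and> LValpha a k x = 1}"

definition box_int :: "real^'n \<Rightarrow> real^'n \<Rightarrow> (real^'n) set" where
  "box_int u v = {x. (\<forall>i. 0 \<le> x$i) \<and> (\<forall>i. u$i \<le> x$i \<and> x$i \<le> v$i)}"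

definition condC :: "real^'n^'n \<Rightarrow> 'n \<Rightarrow> bool" where
  "condC a k \<longleftrightarrow>
     LValpha a k (restr (Uvec a) (UNIV - {k})) < 1 \<or>
     (\<forall>x \<in> gamma a k \<inter> box_int 0 (restr (Uvec a) (UNIV - {k})).
        \<forall>j. j \<noteq> k \<longrightarrow> LValpha a j x > 1)"

definition star :: "real^'n^'n \<Rightarrow> 'n \<Rightarrow> 'n \<Rightarrow> bool" where
  "star a i j \<longleftrightarrow>
     (let W = restr (Uvec a) (UNIV - {i, j}) in
      max 0 (a$i$j / a$j$j * (1 - LValpha a j W)) < 1 - LValpha a i W)"

end

theory Submission
  imports Defs
begin

text \<open>
  Write U for Uvec a and alpha_m x for LValpha a m x.  The whole proof rests on one
  geometric property of U (lemma below_other_nullclines_beyond_U): if x >= 0 lies on or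
  below the nullcline gamma_j and x_j > U_j, then alpha_k x < 1 for every k /= j.

  Part (i).  Let W = U restricted to I - {i,j}.  Scaling W onto gamma_i and the result
  onto gamma_j and applying (C_i), (C_j) shows alpha_i W < 1.  Moving from W along the
  j-th axis up to gamma_i then either stays in the box of (C_i) or passes beyond U_j; in
  both cases one obtains the slope inequality a_ij (1 - alpha_j W) < a_jj (1 - alpha_i W),
  which together give (*)_ij.

  Part (ii).  Put e_m = alpha_m (U restricted to I - {i}) - 1, the overshoot of that
  vertex over gamma_m.  If e_i < 0 then (C_i) holds by its first alternative.  Otherwise
  (*)_ij turns into inequalities between the overshoots, and by the key property once
  more we get a_jk e_i < a_ik e_j for all j, k /= i; summing these along the segment
  from a point x of gamma_i in the box to the vertex shows alpha_j x > 1.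

  Part (iii) is (i) for J = I together with (ii).
\<close>

lemma LValpha_split_coord:
  "LValpha a m x = a$m$j * x$j + (\<Sum>l\<in>UNIV-{j}. a$m$l * x$l)"
  unfolding LValpha_def by (simp add: sum.remove[of UNIV j])

lemma LValpha_update_coord:
  "LValpha a m (\<chi> l. if l = j then c else x$l) = LValpha a m x + a$m$j * (c - x$j)"
proof -
  have "(\<Sum>l\<in>UNIV-{j}. a$m$l * (\<chi> l. if l = j then c else x$l)$l) = (\<Sum>l\<in>UNIV-{j}. a$m$l * x$l)"
    by (rule sum.cong) auto
  then show ?thesis
    using LValpha_split_coord[of a m "\<chi> l. if l = j then c else x$l" j] LValpha_split_coord[of a m x j]
    by (simp add: algebra_simps)
qed

lemma LValpha_scale: "LValpha a m (\<chi> l. t * x$l) = t * LValpha a m x"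
  unfolding LValpha_def by (simp add: sum_distrib_left algebra_simps)

lemma LValpha_mono:
  assumes "\<forall>i j. a$i$j \<ge> 0" "\<forall>l. x$l \<le> y$l"
  shows "LValpha a m x \<le> LValpha a m y"
  unfolding LValpha_def using assms by (intro sum_mono mult_left_mono) auto

lemma LValpha_restr_insert:
  assumes "i \<noteq> j"
  shows "LValpha a m (restr u (UNIV-{i})) = LValpha a m (restr u (UNIV-{i,j})) + a$m$j * u$j"
proof -
  have "restr u (UNIV-{i}) = (\<chi> l. if l = j then u$j else restr u (UNIV-{i,j}) $ l)"
    using assms by (simp add: vec_eq_iff restr_def)
  then show ?thesis by (simp add: LValpha_update_coord) (simp add: restr_def)
qed

definition U_diag_case :: "real^'n^'n \<Rightarrow> 'n \<Rightarrow> bool" where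
  "U_diag_case a j \<longleftrightarrow> (\<exists>k. k \<noteq> j \<and> (a$j$j \<le> a$k$j \<or> a$j$k = 0))"

definition U_zero_case :: "real^'n^'n \<Rightarrow> 'n \<Rightarrow> bool" where
  "U_zero_case a j \<longleftrightarrow> (\<forall>k l. k \<noteq> j \<longrightarrow> l \<noteq> j \<longrightarrow> a$k$j < a$j$j \<and> a$k$l \<le> a$j$l)"

definition U_ratios :: "real^'n^'n \<Rightarrow> 'n \<Rightarrow> real set" where
  "U_ratios a j = {(a$k$l - a$j$l) / (a$j$j * a$k$l - a$j$l * a$k$j) | l k.
                    l \<noteq> j \<and> k \<noteq> j \<and> a$k$l > a$j$l}"

lemma Uvec_cases:
  "Uvec a $ j = (if U_diag_case a j then 1 / a$j$j
                 else if U_zero_case a j then 0 else Max (U_ratios a j))"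
  unfolding Uvec_def U_diag_case_def U_zero_case_def U_ratios_def by simp

lemma not_U_diag_case:
  assumes "\<forall>i j. a$i$j \<ge> 0" "\<not> U_diag_case a j" "l \<noteq> j"
  shows "a$l$j < a$j$j \<and> 0 < a$j$l"
  using assms unfolding U_diag_case_def by (metis not_le order_le_less)

lemma U_ratio_le_Max:
  assumes "l \<noteq> j" "k \<noteq> j" "a$k$l > a$j$l"
  shows "(a$k$l - a$j$l) / (a$j$j * a$k$l - a$j$l * a$k$j) \<le> Max (U_ratios a j)"
proof -
  have "U_ratios a j \<subseteq> (\<lambda>(l,k). (a$k$l - a$j$l) / (a$j$j * a$k$l - a$j$l * a$k$j)) ` UNIV"
    unfolding U_ratios_def by auto
  then have "finite (U_ratios a j)" by (rule finite_subset) simp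
  moreover have "(a$k$l - a$j$l) / (a$j$j * a$k$l - a$j$l * a$k$j) \<in> U_ratios a j"
    using assms unfolding U_ratios_def by blast
  ultimately show ?thesis by simp
qed

lemma U_ratio_denominator_pos:
  fixes a :: "real^'n^'n"
  assumes "0 < a$j$j" "\<forall>i j. a$i$j \<ge> 0" "a$k$j < a$j$j" "a$k$l > a$j$l"
  shows "0 < a$j$j * a$k$l - a$j$l * a$k$j"
proof -
  have "a$j$j * a$j$l < a$j$j * a$k$l" using assms(1,4) by simp
  moreover have "a$k$j * a$j$l \<le> a$j$j * a$j$l" using assms by (simp add: mult_right_mono)
  ultimately show ?thesis by (simp add: mult.commute)
qed

lemma Uvec_nonneg:
  assumes pos: "\<forall>i. a$i$i > 0" and nn: "\<forall>i j. a$i$j \<ge> 0"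
  shows "0 \<le> Uvec a $ j"
proof -
  consider "U_diag_case a j" | "\<not> U_diag_case a j" "U_zero_case a j"
    | "\<not> U_diag_case a j" "\<not> U_zero_case a j" by blast
  then show ?thesis
  proof cases
    case 3
    then obtain k l where kl: "k \<noteq> j" "l \<noteq> j" "a$k$l > a$j$l" "a$k$j < a$j$j"
      unfolding U_diag_case_def U_zero_case_def by force
    have "0 < (a$k$l - a$j$l) / (a$j$j * a$k$l - a$j$l * a$k$j)"
      using kl U_ratio_denominator_pos[of a j k l] pos nn by (intro divide_pos_pos) auto
    also have "\<dots> \<le> Max (U_ratios a j)" by (rule U_ratio_le_Max[OF kl(2,1,3)])
    finally show ?thesis using 3 by (simp add: Uvec_cases)
  qed (use pos[rule_format, of j] in \<open>auto simp: Uvec_cases\<close>)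
qed

lemma restr_Uvec_nonneg:
  "\<forall>i. a$i$i > 0 \<Longrightarrow> \<forall>i j. a$i$j \<ge> 0 \<Longrightarrow> 0 \<le> restr (Uvec a) B $ l"
  using Uvec_nonneg[of a l] by (simp add: restr_def)

text \<open>
  Coordinatewise, x_j > U_j says
  a_kl (1 - a_jj x_j) < a_jl (1 - a_kj x_j) for every l /= j; summing over l against the
  remaining coordinates of x compares the parts of alpha_k x and alpha_j x off the
  j-th coordinate.
\<close>

lemma beyond_U_ratio_coord:
  assumes pos: "\<forall>i. a$i$i > 0" and nn: "\<forall>i j. a$i$j \<ge> 0"
    and diag: "\<not> U_diag_case a j" and lj: "l \<noteq> j" and kj: "k \<noteq> j"
    and gt: "Max (U_ratios a j) < x$j" and xj: "0 < x$j" and below: "a$j$j * x$j \<le> 1"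
  shows "a$k$l * (1 - a$j$j * x$j) < a$j$l * (1 - a$k$j * x$j)"
proof (cases "a$k$l > a$j$l")
  case True
  define D where "D = a$j$j * a$k$l - a$j$l * a$k$j"
  have Dp: "0 < D"
    unfolding D_def using U_ratio_denominator_pos not_U_diag_case[OF nn diag kj] pos nn True by blast
  have "(a$k$l - a$j$l) / D < x$j"
    using U_ratio_le_Max[OF lj kj True] gt unfolding D_def by linarith
  then have "a$k$l - a$j$l < x$j * D" using Dp by (simp add: divide_less_eq mult.commute)
  then show ?thesis unfolding D_def by (simp add: algebra_simps)
next
  case False
  have "a$j$l * (1 - a$k$j * x$j) - a$k$l * (1 - a$j$j * x$j)
      = (1 - a$j$j * x$j) * (a$j$l - a$k$l) + x$j * (a$j$l * (a$j$j - a$k$j))"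
    by (simp add: algebra_simps)
  moreover have "0 \<le> (1 - a$j$j * x$j) * (a$j$l - a$k$l)" using below False by simp
  moreover have "0 < x$j * (a$j$l * (a$j$j - a$k$j))"
    using xj not_U_diag_case[OF nn diag lj] not_U_diag_case[OF nn diag kj] by simp
  ultimately show ?thesis by linarith
qed

lemma below_other_nullcline_ratio_case:
  assumes pos: "\<forall>i. a$i$i > 0" and nn: "\<forall>i j. a$i$j \<ge> 0" and diag: "\<not> U_diag_case a j"
    and x0: "\<forall>l. 0 \<le> x$l" and xj: "LValpha a j x \<le> 1"
    and gt: "Max (U_ratios a j) < x$j" and xjp: "0 < x$j" and kj: "k \<noteq> j"
  shows "LValpha a k x < 1"
proof -
  define Sj where "Sj = (\<Sum>l\<in>UNIV-{j}. a$j$l * x$l)"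
  define Sk where "Sk = (\<Sum>l\<in>UNIV-{j}. a$k$l * x$l)"
  define R where "R = 1 - a$j$j * x$j"
  define Q where "Q = 1 - a$k$j * x$j"
  have Lj: "LValpha a j x = a$j$j * x$j + Sj" unfolding Sj_def by (rule LValpha_split_coord)
  have Lk: "LValpha a k x = a$k$j * x$j + Sk" unfolding Sk_def by (rule LValpha_split_coord)
  have Sj0: "0 \<le> Sj" unfolding Sj_def using nn x0 by (intro sum_nonneg) auto
  have SjR: "Sj \<le> R" using Lj xj R_def by linarith
  have QR: "R < Q" using not_U_diag_case[OF nn diag kj] xjp unfolding R_def Q_def by simp
  have coord: "a$k$l * R < a$j$l * Q" if "l \<noteq> j" for l
    using beyond_U_ratio_coord[OF pos nn diag that kj gt xjp] Sj0 SjR unfolding R_def Q_def by linarith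
  show ?thesis
  proof (cases "\<exists>l\<in>UNIV-{j}. 0 < x$l")
    case True
    then obtain l0 where l0: "l0 \<noteq> j" "0 < x$l0" by auto
    have "Sk * R = (\<Sum>l\<in>UNIV-{j}. (a$k$l * R) * x$l)"
      unfolding Sk_def by (simp add: sum_distrib_left sum_distrib_right algebra_simps)
    also have "\<dots> < (\<Sum>l\<in>UNIV-{j}. (a$j$l * Q) * x$l)"
    proof (rule sum_strict_mono_ex1)
      show "\<forall>l\<in>UNIV-{j}. a$k$l * R * x$l \<le> a$j$l * Q * x$l"
        using coord x0 by (auto intro: mult_right_mono less_imp_le)
      show "\<exists>l\<in>UNIV-{j}. a$k$l * R * x$l < a$j$l * Q * x$l"
        using coord[OF l0(1)] l0 by (intro bexI[of _ l0] mult_strict_right_mono) auto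
    qed simp
    also have "\<dots> = Sj * Q" unfolding Sj_def by (simp add: sum_distrib_left sum_distrib_right algebra_simps)
    also have "\<dots> \<le> R * Q" using SjR QR Sj0 by (intro mult_right_mono) auto
    finally have lt: "Sk * R < Q * R" by (simp add: mult.commute)
    have "0 < a$j$l0 * x$l0" using not_U_diag_case[OF nn diag l0(1)] l0 by simp
    moreover have "a$j$l0 * x$l0 \<le> Sj" unfolding Sj_def using nn x0 l0 by (intro member_le_sum) auto
    ultimately have "0 < R" using SjR by linarith
    then have "Sk < Q" using lt by simp
    then show ?thesis using Lk Q_def by linarith
  next
    case False
    then have "Sk = 0" unfolding Sk_def using x0
      by (intro sum.neutral) (metis order_le_less mult_zero_right)
    then show ?thesis using Lk Lj QR xj Sj0 R_def Q_def by linarith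
  qed
qed

text \<open>
  Key property: a nonnegative point on or below gamma_j whose j-th coordinate exceeds
  U_j lies strictly below every other nullcline.  This is what U is designed for.
\<close>

lemma below_other_nullclines_beyond_U:
  assumes pos: "\<forall>i. a$i$i > 0" and nn: "\<forall>i j. a$i$j \<ge> 0"
    and x0: "\<forall>l. 0 \<le> x$l" and xj: "LValpha a j x \<le> 1" and gt: "Uvec a $ j < x$j"
    and kj: "k \<noteq> j"
  shows "LValpha a k x < 1"
proof -
  have Lj: "LValpha a j x = a$j$j * x$j + (\<Sum>l\<in>UNIV-{j}. a$j$l * x$l)"
    and Lk: "LValpha a k x = a$k$j * x$j + (\<Sum>l\<in>UNIV-{j}. a$k$l * x$l)"
    by (rule LValpha_split_coord)+
  have Sj0: "0 \<le> (\<Sum>l\<in>UNIV-{j}. a$j$l * x$l)" using nn x0 by (intro sum_nonneg) auto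
  have xjp: "0 < x$j" using Uvec_nonneg[OF pos nn, of j] gt by linarith
  have ajj: "0 < a$j$j" using pos by simp
  consider "U_diag_case a j" | "\<not> U_diag_case a j" "U_zero_case a j"
    | "\<not> U_diag_case a j" "\<not> U_zero_case a j" by blast
  then show ?thesis
  proof cases
    case 1
    then have "1 / a$j$j < x$j" using gt by (simp add: Uvec_cases)
    then have "1 < a$j$j * x$j" using ajj by (simp add: divide_less_eq mult.commute)
    then show ?thesis using Lj Sj0 xj by linarith
  next
    case 2
    have "(\<Sum>l\<in>UNIV-{j}. a$k$l * x$l) \<le> (\<Sum>l\<in>UNIV-{j}. a$j$l * x$l)"
      using 2 x0 kj unfolding U_zero_case_def by (intro sum_mono mult_right_mono) auto
    moreover have "a$k$j * x$j < a$j$j * x$j" using not_U_diag_case[OF nn 2(1) kj] xjp by simp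
    ultimately show ?thesis using Lj Lk xj by linarith
  next
    case 3
    then show ?thesis
      using below_other_nullcline_ratio_case[OF pos nn 3(1) x0 xj _ xjp kj] gt
      by (simp add: Uvec_cases)
  qed
qed

lemma condC_box_point:
  assumes nn: "\<forall>i j. a$i$j \<ge> 0" and C: "condC a k" and g: "x \<in> gamma a k"
    and b: "x \<in> box_int 0 (restr (Uvec a) (UNIV-{k}))" and mk: "m \<noteq> k"
  shows "LValpha a m x > 1"
proof -
  have "LValpha a k x \<le> LValpha a k (restr (Uvec a) (UNIV-{k}))"
    using b by (intro LValpha_mono[OF nn]) (auto simp: box_int_def)
  moreover have "LValpha a k x = 1" using g by (simp add: gamma_def)
  ultimately show ?thesis using C g b mk unfolding condC_def by auto
qed

text \<open>
  Part (i), first half: under (C_i) and (C_j) the point W lies strictly below gamma_i.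
  Otherwise W scaled onto gamma_i gives a point above gamma_j by (C_i), and this point
  scaled onto gamma_j gives a point above gamma_i by (C_j), which is absurd since the
  second scaling factor is < 1.
\<close>

lemma condC_pair_vertex_below:
  assumes pos: "\<forall>i. a$i$i > 0" and nn: "\<forall>i j. a$i$j \<ge> 0"
    and ij: "i \<noteq> j" and Ci: "condC a i" and Cj: "condC a j"
  shows "LValpha a i (restr (Uvec a) (UNIV-{i,j})) < 1"
proof (rule ccontr)
  define U where "U = Uvec a"
  define W where "W = restr U (UNIV-{i,j})"
  have W0: "\<forall>l. 0 \<le> W$l" unfolding W_def U_def using restr_Uvec_nonneg[OF pos nn] by blast
  have U0: "\<forall>l. 0 \<le> U$l" unfolding U_def using Uvec_nonneg[OF pos nn] by blast
  have W_box: "W$l \<le> restr U (UNIV-{m}) $ l" if "m \<in> {i,j}" for l m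
    unfolding W_def restr_def using U0 that by auto
  assume "\<not> LValpha a i (restr (Uvec a) (UNIV-{i,j})) < 1"
  then have Wge: "1 \<le> LValpha a i W" unfolding W_def U_def by simp
  define t where "t = 1 / LValpha a i W"
  have t01: "0 < t" "t \<le> 1" using Wge unfolding t_def by auto
  define x where "x = (\<chi> l. t * W$l)"
  have Lx: "\<And>m. LValpha a m x = t * LValpha a m W" unfolding x_def by (rule LValpha_scale)
  have x0: "\<forall>l. 0 \<le> x$l" unfolding x_def using W0 t01 by simp
  have xW: "\<forall>l. x$l \<le> W$l" unfolding x_def using W0 t01 by (simp add: mult_left_le_one_le)
  have xg: "x \<in> gamma a i" unfolding gamma_def using x0 Lx[of i] Wge t_def by simp
  have xb: "x \<in> box_int 0 (restr U (UNIV-{i}))" unfolding box_int_def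
    using x0 xW W_box[of i] by (auto intro: order_trans)
  have xj: "LValpha a j x > 1" using condC_box_point[OF nn Ci xg xb[unfolded U_def]] ij by simp
  define s where "s = 1 / LValpha a j x"
  have s01: "0 < s" "s < 1" using xj unfolding s_def by auto
  define y where "y = (\<chi> l. s * x$l)"
  have Ly: "\<And>m. LValpha a m y = s * LValpha a m x" unfolding y_def by (rule LValpha_scale)
  have y0: "\<forall>l. 0 \<le> y$l" unfolding y_def using x0 s01 by simp
  have yx: "\<forall>l. y$l \<le> x$l" unfolding y_def using x0 s01 by (simp add: mult_left_le_one_le)
  have yg: "y \<in> gamma a j" unfolding gamma_def using y0 Ly[of j] xj s_def by simp
  have "y$l \<le> restr U (UNIV-{j}) $ l" for l
    using yx[rule_format, of l] xW[rule_format, of l] W_box[of j l] by auto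
  then have yb: "y \<in> box_int 0 (restr U (UNIV-{j}))" unfolding box_int_def using y0 by simp
  have "LValpha a i y > 1" using condC_box_point[OF nn Cj yg yb[unfolded U_def]] ij by simp
  moreover have "LValpha a i y = s" using Ly[of i] Lx[of i] t_def Wge by simp
  ultimately show False using s01 by simp
qed

text \<open>
  Move from W
  along the j-th axis.  If gamma_i is reached within the box of (C_i), that point lies
  above gamma_j; otherwise the point where gamma_j is reached lies beyond U_j and hence,
  by the key property, below gamma_i.
\<close>

lemma condC_slope_inequality:
  assumes pos: "\<forall>i. a$i$i > 0" and nn: "\<forall>i j. a$i$j \<ge> 0"
    and ij: "i \<noteq> j" and Ci: "condC a i"
    and Wi: "LValpha a i (restr (Uvec a) (UNIV-{i,j})) < 1"
  shows "a$i$j * (1 - LValpha a j (restr (Uvec a) (UNIV-{i,j})))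
           < a$j$j * (1 - LValpha a i (restr (Uvec a) (UNIV-{i,j})))"
    (is "a$i$j * ?Rj < a$j$j * ?Ri")
proof -
  define U where "U = Uvec a"
  define W where "W = restr U (UNIV-{i,j})"
  have W0: "\<forall>l. 0 \<le> W$l" unfolding W_def U_def using restr_Uvec_nonneg[OF pos nn] by blast
  have U0: "\<forall>l. 0 \<le> U$l" unfolding U_def using Uvec_nonneg[OF pos nn] by blast
  have Wj: "W$j = 0" unfolding W_def restr_def by simp
  have ajj: "0 < a$j$j" using pos by simp
  have Ri0: "0 < ?Ri" using Wi by simp
  have Lq: "LValpha a m (\<chi> l. if l = j then c else W$l) = LValpha a m W + a$m$j * c" for m c
    using LValpha_update_coord[of a m j c W] Wj by simp
  show ?thesis
  proof (cases "a$i$j = 0")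
    case True then show ?thesis using ajj Ri0 by simp
  next
    case False
    then have aij: "0 < a$i$j" using nn by (metis order_le_less)
    show ?thesis
    proof (cases "?Ri / a$i$j \<le> U$j")
      case True
      define q where "q = (\<chi> l. if l = j then ?Ri / a$i$j else W$l)"
      have q0: "\<forall>l. 0 \<le> q$l" unfolding q_def using W0 Ri0 aij by simp
      have qg: "q \<in> gamma a i" unfolding gamma_def q_def using q0[unfolded q_def] Lq aij W_def U_def by simp
      have "q$l \<le> restr U (UNIV-{i}) $ l" for l
        using True U0 ij unfolding q_def W_def restr_def by auto
      then have qb: "q \<in> box_int 0 (restr U (UNIV-{i}))" unfolding box_int_def using q0 by simp
      have "LValpha a j q > 1" using condC_box_point[OF nn Ci qg qb[unfolded U_def]] ij by simp
      then have "?Rj < a$j$j * (?Ri / a$i$j)" using Lq unfolding q_def W_def U_def by simp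
      then show ?thesis using aij by (simp add: less_divide_eq mult.commute)
    next
      case False
      show ?thesis
      proof (rule ccontr)
        assume "\<not> ?thesis"
        then have h: "a$j$j * ?Ri \<le> a$i$j * ?Rj" by simp
        then have "?Ri / a$i$j \<le> ?Rj / a$j$j" using aij ajj by (simp add: divide_simps mult.commute)
        define q where "q = (\<chi> l. if l = j then ?Rj / a$j$j else W$l)"
        have gt: "U$j < q$j" using False \<open>?Ri / a$i$j \<le> ?Rj / a$j$j\<close> unfolding q_def by simp
        have "0 \<le> q$l" for l using W0 gt U0[rule_format, of j] by (cases "l = j") (auto simp: q_def)
        moreover have "LValpha a j q \<le> 1" using Lq ajj unfolding q_def W_def U_def by simp
        ultimately have "LValpha a i q < 1"
          using below_other_nullclines_beyond_U[OF pos nn _ _ gt[unfolded U_def]] ij by auto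
        moreover have "?Ri \<le> a$i$j * (?Rj / a$j$j)" using h ajj by (simp add: le_divide_eq mult.commute)
        ultimately show False using Lq unfolding q_def W_def U_def by simp
      qed
    qed
  qed
qed

lemma star_of_condC:
  assumes pos: "\<forall>i. a$i$i > 0" and nn: "\<forall>i j. a$i$j \<ge> 0"
    and ij: "i \<noteq> j" and Ci: "condC a i" and Cj: "condC a j"
  shows "star a i j"
proof -
  have below: "LValpha a i (restr (Uvec a) (UNIV-{i,j})) < 1"
    by (rule condC_pair_vertex_below[OF pos nn ij Ci Cj])
  have "a$i$j / a$j$j * (1 - LValpha a j (restr (Uvec a) (UNIV-{i,j})))
          < 1 - LValpha a i (restr (Uvec a) (UNIV-{i,j}))"
    using condC_slope_inequality[OF pos nn ij Ci below] pos
    by (simp add: divide_simps mult.commute)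
  then show ?thesis using below unfolding star_def Let_def by simp
qed

definition overshoot :: "real^'n^'n \<Rightarrow> 'n \<Rightarrow> 'n \<Rightarrow> real" where
  "overshoot a i m = LValpha a m (restr (Uvec a) (UNIV-{i})) - 1"

text \<open>(*)_ik rewritten in terms of overshoots, by adding back the k-th coordinate.\<close>

lemma star_overshoot:
  assumes ik: "i \<noteq> k" and st: "star a i k" and pos: "\<forall>i. a$i$i > 0"
  shows "overshoot a i i < a$i$k * Uvec a $ k \<and> a$k$k * overshoot a i i < a$i$k * overshoot a i k"
proof -
  define V where "V = restr (Uvec a) (UNIV-{i,k})"
  have LW: "overshoot a i m = LValpha a m V + a$m$k * Uvec a $ k - 1" for m
    unfolding overshoot_def V_def using LValpha_restr_insert[OF ik] by simp
  have akk: "0 < a$k$k" using pos by simp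
  have h1: "0 < 1 - LValpha a i V"
    and h2: "a$i$k / a$k$k * (1 - LValpha a k V) < 1 - LValpha a i V"
    using st unfolding star_def Let_def V_def by auto
  from h2 have "a$i$k * (1 - LValpha a k V) < a$k$k * (1 - LValpha a i V)"
    using akk by (simp add: divide_simps mult.commute)
  then show ?thesis using h1 unfolding LW by (simp add: algebra_simps)
qed

lemma overshoot_positivity:
  assumes pos: "\<forall>i. a$i$i > 0" and nn: "\<forall>i j. a$i$j \<ge> 0"
    and H: "\<forall>j. j \<noteq> i \<longrightarrow> star a i j" and e0: "0 \<le> overshoot a i i" and ki: "k \<noteq> i"
  shows "0 < a$i$k \<and> 0 < overshoot a i k"
proof -
  have SD: "overshoot a i i < a$i$k * Uvec a $ k" "a$k$k * overshoot a i i < a$i$k * overshoot a i k"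
    using star_overshoot[of i k a] H ki pos by auto
  have aik: "0 < a$i$k" using SD(1) e0 nn Uvec_nonneg[OF pos nn, of k]
    by (metis zero_less_mult_iff not_le order_le_less le_less_trans)
  have "0 \<le> a$k$k * overshoot a i i" using e0 pos[rule_format, of k] by simp
  then have "0 < a$i$k * overshoot a i k" using SD(2) by linarith
  then show ?thesis using aik by (simp add: zero_less_mult_iff)
qed

text \<open>
  The arithmetic heart of the slope comparison: with T = a_ik U_k - e > 0 and
  a_ij s = T, the two hypotheses force a_ij a_jk > a_ik a_jj, and then
  g + a_jj s - a_jk U_k < 0.
\<close>

lemma slope_comparison_arith:
  fixes aij aik ajj ajk e g Uk s :: real
  assumes aij: "0 < aij" and aik: "0 < aik" and ep: "0 < e"
    and slope_j: "ajj * e < aij * g" and cg: "aik * g \<le> ajk * e"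
    and T: "e < aik * Uk" and s: "aij * s = aik * Uk - e"
  shows "g + ajj * s - ajk * Uk < 0"
proof -
  have F1: "aij * (aik * g) \<le> aij * (ajk * e)" using cg aij by simp
  have F2: "aik * (ajj * e) < aik * (aij * g)" using slope_j aik by simp
  have "0 < (aij * ajk - aik * ajj) * e" using F1 F2 by (simp add: algebra_simps)
  then have "0 < aij * ajk - aik * ajj" using ep by (simp add: zero_less_mult_iff)
  then have rT: "0 < (aij * ajk - aik * ajj) * (aik * Uk - e)" using T by simp
  have "aik * aij * (g + ajj * s - ajk * Uk) = aij * (aik * g) + aik * ajj * (aij * s) - aik * aij * ajk * Uk"
    by (simp add: algebra_simps)
  also have "\<dots> = aij * (aik * g) - aij * (ajk * e) - (aij * ajk - aik * ajj) * (aik * Uk - e)"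
    unfolding s by (simp add: algebra_simps)
  finally have "aik * aij * (g + ajj * s - ajk * Uk)
      = aij * (aik * g) - aij * (ajk * e) - (aij * ajk - aik * ajj) * (aik * Uk - e)" .
  then have "aik * aij * (g + ajj * s - ajk * Uk) < 0" using F1 rT by linarith
  then show ?thesis using aik aij by (simp add: mult_less_0_iff)
qed

text \<open>
  Slope comparison for k /= j and positive overshoot: otherwise the point obtained from
  U restricted to I - {i} by deleting the k-th coordinate and pushing the j-th one until
  gamma_i is reached would lie on gamma_i, on or below gamma_j and beyond U_j.
\<close>

lemma overshoot_slope_offdiag:
  assumes pos: "\<forall>i. a$i$i > 0" and nn: "\<forall>i j. a$i$j \<ge> 0"
    and H: "\<forall>j. j \<noteq> i \<longrightarrow> star a i j" and ep: "0 < overshoot a i i"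
    and ji: "j \<noteq> i" and ki: "k \<noteq> i" and kj: "k \<noteq> j"
  shows "a$j$k * overshoot a i i < a$i$k * overshoot a i j"
proof (rule ccontr)
  assume "\<not> ?thesis"
  then have cg: "a$i$k * overshoot a i j \<le> a$j$k * overshoot a i i" by simp
  define U where "U = Uvec a"
  define W where "W = restr U (UNIV-{i})"
  define e where "e = overshoot a i i"
  define s where "s = (a$i$k * U$k - e) / a$i$j"
  have aij: "0 < a$i$j" and aik: "0 < a$i$k"
    using overshoot_positivity[OF pos nn H] ep ji ki by auto
  have SDk: "e < a$i$k * U$k" and SDj: "a$j$j * e < a$i$j * overshoot a i j"
    using star_overshoot[of i _ a] H ji ki pos unfolding e_def U_def by auto
  have as: "a$i$j * s = a$i$k * U$k - e" using aij s_def by simp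
  have sp: "0 < s" using SDk aij s_def by simp
  have WU: "W$l = U$l" if "l \<noteq> i" for l using that unfolding W_def restr_def by simp
  define p where "p = (\<chi> l. if l = j then U$j + s else (\<chi> l. if l = k then 0 else W$l)$l)"
  have Lp: "LValpha a m p = LValpha a m W - a$m$k * U$k + a$m$j * s" for m
    unfolding p_def using LValpha_update_coord[of a m j "U$j + s"] LValpha_update_coord[of a m k 0 W]
      WU[OF ji] WU[OF ki] kj by simp
  have LW: "LValpha a m W = overshoot a i m + 1" for m unfolding overshoot_def W_def U_def by simp
  have p_on_i: "LValpha a i p = 1" using Lp[of i] LW[of i] as e_def by simp
  have p_below_j: "LValpha a j p \<le> 1"
    using slope_comparison_arith[OF aij aik ep[folded e_def] SDj cg[folded e_def] SDk as]
      Lp[of j] LW[of j] by simp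
  have p0: "\<forall>l. 0 \<le> p$l"
    using restr_Uvec_nonneg[OF pos nn, of B l for B l] Uvec_nonneg[OF pos nn, of j] sp
    unfolding p_def W_def U_def by simp
  have p_beyond: "Uvec a $ j < p$j" using sp by (simp add: p_def U_def)
  have "LValpha a i p < 1"
    using below_other_nullclines_beyond_U[OF pos nn p0 p_below_j p_beyond] ji by simp
  then show False using p_on_i by simp
qed

lemma overshoot_slopes:
  assumes pos: "\<forall>i. a$i$i > 0" and nn: "\<forall>i j. a$i$j \<ge> 0"
    and H: "\<forall>j. j \<noteq> i \<longrightarrow> star a i j" and e0: "0 \<le> overshoot a i i"
    and ji: "j \<noteq> i" and ki: "k \<noteq> i"
  shows "a$j$k * overshoot a i i < a$i$k * overshoot a i j"
proof -
  consider "k = j" | "k \<noteq> j" "overshoot a i i = 0" | "k \<noteq> j" "0 < overshoot a i i"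
    using e0 by fastforce
  then show ?thesis
  proof cases
    case 1 then show ?thesis using star_overshoot[of i k a] H ki pos by simp
  next
    case 2 then show ?thesis using overshoot_positivity[OF pos nn H e0] ji ki by simp
  qed (use overshoot_slope_offdiag[OF pos nn H _ ji ki] in blast)
qed

text \<open>
  For x on gamma_i below the vertex, let d = vertex - x >= 0.
  Then sum_l a_il d_l = e_i and the slope comparison gives
  (sum_l a_jl d_l) e_i < e_i e_j unless d = 0, so alpha_j x > 1.
\<close>

lemma condC_of_overshoot_slopes:
  assumes nn: "\<forall>i j. a$i$j \<ge> 0" and e0: "0 \<le> overshoot a i i"
    and aik: "\<forall>k. k \<noteq> i \<longrightarrow> 0 < a$i$k" and gpos: "\<forall>j. j \<noteq> i \<longrightarrow> 0 < overshoot a i j"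
    and slopes: "\<forall>j k. j \<noteq> i \<longrightarrow> k \<noteq> i \<longrightarrow> a$j$k * overshoot a i i < a$i$k * overshoot a i j"
  shows "condC a i"
proof -
  define W where "W = restr (Uvec a) (UNIV-{i})"
  define e where "e = overshoot a i i"
  have LW: "LValpha a m W = overshoot a i m + 1" for m unfolding overshoot_def W_def by simp
  have main: "1 < LValpha a j x" if xg: "x \<in> gamma a i" and xb: "x \<in> box_int 0 W" and ji: "j \<noteq> i"
    for x j
  proof -
    have x0: "\<forall>l. 0 \<le> x$l" and Lxi: "LValpha a i x = 1" using xg by (auto simp: gamma_def)
    have xW: "\<forall>l. x$l \<le> W$l" using xb by (auto simp: box_int_def)
    define d where "d = (\<lambda>l. W$l - x$l)"
    have d0: "\<forall>l. 0 \<le> d l" using xW d_def by simp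
    have "W$i = 0" unfolding W_def restr_def by simp
    then have di: "d i = 0" using xW[rule_format, of i] x0[rule_format, of i] unfolding d_def by linarith
    have Sd: "(\<Sum>l\<in>UNIV. a$m$l * d l) = LValpha a m W - LValpha a m x" for m
      unfolding LValpha_def d_def by (simp add: right_diff_distrib sum_subtractf)
    have Sdi: "(\<Sum>l\<in>UNIV. a$i$l * d l) = e" using Sd[of i] Lxi LW[of i] e_def by simp
    have per: "a$j$l * d l * e < a$i$l * d l * overshoot a i j" if "l \<noteq> i" "0 < d l" for l
    proof -
      have "(a$j$l * e) * d l < (a$i$l * overshoot a i j) * d l"
        using slopes ji that unfolding e_def by (intro mult_strict_right_mono) auto
      then show ?thesis by (simp add: algebra_simps)
    qed
    have per_le: "a$j$l * d l * e \<le> a$i$l * d l * overshoot a i j" for l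
    proof (cases "l \<noteq> i \<and> 0 < d l")
      case True then show ?thesis using per by (simp add: less_imp_le)
    next
      case False
      then have "d l = 0" using di d0[rule_format, of l] by auto
      then show ?thesis by simp
    qed
    show ?thesis
    proof (cases "\<exists>l. l \<noteq> i \<and> 0 < d l")
      case True
      then obtain l0 where l0: "l0 \<noteq> i" "0 < d l0" by blast
      have "(\<Sum>l\<in>UNIV. a$j$l * d l) * e = (\<Sum>l\<in>UNIV. a$j$l * d l * e)" by (simp add: sum_distrib_right)
      also have "\<dots> < (\<Sum>l\<in>UNIV. a$i$l * d l * overshoot a i j)"
        using per[OF l0] per_le by (intro sum_strict_mono_ex1) auto
      also have "\<dots> = e * overshoot a i j" by (simp only: sum_distrib_right[symmetric] Sdi)
      finally have "(\<Sum>l\<in>UNIV. a$j$l * d l) * e < e * overshoot a i j" .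
      moreover have "0 < e"
      proof -
        have "0 < a$i$l0 * d l0" using aik l0 by simp
        also have "\<dots> \<le> (\<Sum>l\<in>UNIV. a$i$l * d l)" using nn d0 by (intro member_le_sum) auto
        finally show ?thesis using Sdi by simp
      qed
      ultimately have "(\<Sum>l\<in>UNIV. a$j$l * d l) < overshoot a i j" by (simp add: mult.commute)
      then show ?thesis using Sd[of j] LW[of j] by simp
    next
      case False
      then have "d l = 0" for l using di d0[rule_format, of l] by (cases "l = i") auto
      then show ?thesis using Sd[of j] LW[of j] gpos[rule_format, OF ji] by simp
    qed
  qed
  show ?thesis unfolding condC_def using main unfolding W_def by blast
qed

lemma condC_of_star:
  assumes pos: "\<forall>i. a$i$i > 0" and nn: "\<forall>i j. a$i$j \<ge> 0"
    and H: "\<forall>j. j \<noteq> i \<longrightarrow> star a i j"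
  shows "condC a i"
proof (cases "overshoot a i i < 0")
  case True then show ?thesis unfolding condC_def overshoot_def by simp
next
  case False
  then have e0: "0 \<le> overshoot a i i" by simp
  show ?thesis
    using condC_of_overshoot_slopes[OF nn e0] overshoot_positivity[OF pos nn H e0]
      overshoot_slopes[OF pos nn H e0] by blast
qed

theorem lemma3p2:
  fixes a :: "real^'n^'n"
  assumes "CARD('n) \<ge> 2"
    and "\<forall>i. a$i$i > 0"
    and "\<forall>i j. a$i$j \<ge> 0"
  shows "(\<forall>J::'n set. card J > 1 \<longrightarrow> (\<forall>i\<in>J. condC a i) \<longrightarrow>
            (\<forall>i\<in>J. \<forall>j\<in>J. i \<noteq> j \<longrightarrow> star a i j))
       \<and> (\<forall>i. (\<forall>j. j \<noteq> i \<longrightarrow> star a i j) \<longrightarrow> condC a i)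
       \<and> ((\<forall>i. condC a i) \<longleftrightarrow> (\<forall>i j. i \<noteq> j \<longrightarrow> star a i j))"
proof (intro conjI)
  note part_i = star_of_condC[OF assms(2,3)] and part_ii = condC_of_star[OF assms(2,3)]
  show "\<forall>J::'n set. card J > 1 \<longrightarrow> (\<forall>i\<in>J. condC a i) \<longrightarrow>
          (\<forall>i\<in>J. \<forall>j\<in>J. i \<noteq> j \<longrightarrow> star a i j)"
    using part_i by blast
  show "\<forall>i. (\<forall>j. j \<noteq> i \<longrightarrow> star a i j) \<longrightarrow> condC a i"
    using part_ii by blast
  show "(\<forall>i. condC a i) \<longleftrightarrow> (\<forall>i j. i \<noteq> j \<longrightarrow> star a i j)"
  proof
    assume "\<forall>i. condC a i"
    then show "\<forall>i j. i \<noteq> j \<longrightarrow> star a i j" using part_i by blast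
  next
    assume "\<forall>i j. i \<noteq> j \<longrightarrow> star a i j"
    then show "\<forall>i. condC a i" using part_ii by metis
  qed
qed

end
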